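(* Let $K\in\{\mathbb R,\mathbb C,\mathbb H\}$ and let $(E,d)$ be a metric vector space over $K$ such that $d$ is $C_0$-translation invariant and $(C_1,C_2,C_3)$-lipschitz multiplicative. Let $d_0(x,y)=\int_{\mathbb U}d(ux,uy)\,d\mu(u)$ and $\delta_0(x,y)=\lim_{n\to\infty}\frac1n d_0(nx,ny)$. Then every set that is closed (resp. open) for $\delta_0$ is closed (resp. open) for $d$; that is, the topology generated by $d$ is finer than the topology generated by $\delta_0$.
   Context: A metric vector space is a topological vector space over $K$ whose topology is generated by the metric $d$. $\mathbb U=\{u\in K:|u|=1\}$, $\mu$ the right-invariant Haar probability measure on $\mathbb U$. $d$ is $C_0$-translation invariant if $d(x+z,y+z)\le d(x,y)+C_0$ for all $x,y,z$. $(C_1,C_2,C_3)$-lipschitz multiplicative ($C_1\ge1$, $C_2,C_3\ge0$) means $C_1^{-1}|\lambda|d(x,y)-C_2|\lambda|-C_3\le d(\lambda x,\lambda y)\le C_1|\lambda|d(x,y)+C_2|\lambda|+C_3$ for all $\lambda\in K$, $x,y\in E$. (Under these hypotheses the limit defining $\delta_0$ exists.) *)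

theory Defs
  imports "HOL-Analysis.Analysis" "HOL-Probability.Probability"
begin

definition gen_top :: "('e \<Rightarrow> 'e \<Rightarrow> real) \<Rightarrow> 'e topology" where
  "gen_top \<delta> = topology (\<lambda>S. \<forall>x\<in>S. \<exists>r>0. \<forall>y. \<delta> x y < r \<longrightarrow> y \<in> S)"

definition left_vector_space :: "('k::ring_1 \<Rightarrow> 'e::ab_group_add \<Rightarrow> 'e) \<Rightarrow> bool" where
  "left_vector_space sc \<longleftrightarrow>
     (\<forall>a x y. sc a (x + y) = sc a x + sc a y) \<and>
     (\<forall>a b x. sc (a + b) x = sc a x + sc b x) \<and>
     (\<forall>a b x. sc (a * b) x = sc a (sc b x)) \<and>
     (\<forall>x. sc 1 x = x)"

definition metric_vector_space ::
  "('k::real_normed_div_algebra \<Rightarrow> 'e::ab_group_add \<Rightarrow> 'e) \<Rightarrow> ('e \<Rightarrow> 'e \<Rightarrow> real) \<Rightarrow> bool" where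
  "metric_vector_space sc d \<longleftrightarrow>
     left_vector_space sc \<and> Metric_space UNIV d \<and>
     continuous_map (prod_topology (gen_top d) (gen_top d)) (gen_top d) (\<lambda>(x, y). x + y) \<and>
     continuous_map (prod_topology euclidean (gen_top d)) (gen_top d) (\<lambda>(c, x). sc c x)"

definition translation_invariant_C :: "real \<Rightarrow> ('e::ab_group_add \<Rightarrow> 'e \<Rightarrow> real) \<Rightarrow> bool" where
  "translation_invariant_C C0 d \<longleftrightarrow> (\<forall>x y z. d (x + z) (y + z) \<le> d x y + C0)"

definition lipschitz_multiplicative ::
  "real \<Rightarrow> real \<Rightarrow> real \<Rightarrow> ('k::real_normed_div_algebra \<Rightarrow> 'e \<Rightarrow> 'e) \<Rightarrow> ('e \<Rightarrow> 'e \<Rightarrow> real) \<Rightarrow> bool" where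
  "lipschitz_multiplicative C1 C2 C3 sc d \<longleftrightarrow> C1 \<ge> 1 \<and> C2 \<ge> 0 \<and> C3 \<ge> 0 \<and>
     (\<forall>l x y. norm l * d x y / C1 - C2 * norm l - C3 \<le> d (sc l x) (sc l y) \<and>
              d (sc l x) (sc l y) \<le> C1 * norm l * d x y + C2 * norm l + C3)"

definition unit_sphere_K :: "'k::real_normed_div_algebra set" where
  "unit_sphere_K = {u. norm u = 1}"

definition haar_prob_on_unit_sphere :: "'k::real_normed_div_algebra measure \<Rightarrow> bool" where
  "haar_prob_on_unit_sphere \<mu> \<longleftrightarrow>
     prob_space \<mu> \<and> sets \<mu> = sets (restrict_space borel unit_sphere_K) \<and>
     (\<forall>A\<in>sets \<mu>. \<forall>v\<in>unit_sphere_K. emeasure \<mu> ((\<lambda>u. u * v) ` A) = emeasure \<mu> A)"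

definition d0 :: "'k::real_normed_div_algebra measure \<Rightarrow> ('k \<Rightarrow> 'e \<Rightarrow> 'e) \<Rightarrow> ('e \<Rightarrow> 'e \<Rightarrow> real) \<Rightarrow> 'e \<Rightarrow> 'e \<Rightarrow> real" where
  "d0 \<mu> sc d x y = (\<integral>u. d (sc u x) (sc u y) \<partial>\<mu>)"

definition delta0 :: "'k::real_normed_div_algebra measure \<Rightarrow> ('k \<Rightarrow> 'e \<Rightarrow> 'e) \<Rightarrow> ('e \<Rightarrow> 'e \<Rightarrow> real) \<Rightarrow> 'e \<Rightarrow> 'e \<Rightarrow> real" where
  "delta0 \<mu> sc d x y = lim (\<lambda>n. d0 \<mu> sc d (sc (of_nat n) x) (sc (of_nat n) y) / real n)"

end

theory Submission
  imports Defs
begin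

(* If d(0, m h) < 1 then, writing n u h = (n u / m)(m h) and using the lipschitz bound
   for the scalar n u / m of norm n / m, every d(n u x, n u (x + h)) is at most
   (C1 + C2) n / m + C3 + C0.  Averaging over u and dividing by n gives
   delta0(x, x + h) <= (C1 + C2) / m.  Since h -> m h is continuous for d, each
   delta0-ball around x contains a d-ball around x.  The limit defining delta0 exists
   by Fekete's lemma, d0 being subadditive along n up to the constant 2 C0. *)

lemma istopology_gen_top:
  "istopology (\<lambda>S. \<forall>x\<in>S. \<exists>r>0. \<forall>y. (\<delta> :: 'e \<Rightarrow> 'e \<Rightarrow> real) x y < r \<longrightarrow> y \<in> S)"
  unfolding istopology_def
proof (intro conjI allI impI)
  fix S T
  assume S: "\<forall>x\<in>S. \<exists>r>0. \<forall>y. \<delta> x y < r \<longrightarrow> y \<in> S"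
    and T: "\<forall>x\<in>T. \<exists>r>0. \<forall>y. \<delta> x y < r \<longrightarrow> y \<in> T"
  show "\<forall>x\<in>S \<inter> T. \<exists>r>0. \<forall>y. \<delta> x y < r \<longrightarrow> y \<in> S \<inter> T"
  proof
    fix x assume "x \<in> S \<inter> T"
    then obtain r1 r2 where "r1 > 0" "r2 > 0"
      "\<forall>y. \<delta> x y < r1 \<longrightarrow> y \<in> S" "\<forall>y. \<delta> x y < r2 \<longrightarrow> y \<in> T"
      using S T by blast
    then show "\<exists>r>0. \<forall>y. \<delta> x y < r \<longrightarrow> y \<in> S \<inter> T"
      by (intro exI[of _ "min r1 r2"]) auto
  qed
next
  fix \<K>
  assume \<K>: "\<forall>S\<in>\<K>. \<forall>x\<in>S. \<exists>r>0. \<forall>y. \<delta> x y < r \<longrightarrow> y \<in> S"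
  show "\<forall>x\<in>\<Union>\<K>. \<exists>r>0. \<forall>y. \<delta> x y < r \<longrightarrow> y \<in> \<Union>\<K>"
  proof
    fix x assume "x \<in> \<Union>\<K>"
    then obtain S where "S \<in> \<K>" "x \<in> S"
      by blast
    then obtain r where "r > 0" "\<forall>y. \<delta> x y < r \<longrightarrow> y \<in> S"
      using \<K> by blast
    with \<open>S \<in> \<K>\<close> show "\<exists>r>0. \<forall>y. \<delta> x y < r \<longrightarrow> y \<in> \<Union>\<K>"
      by blast
  qed
qed

lemma openin_gen_top:
  "openin (gen_top \<delta>) S \<longleftrightarrow> (\<forall>x\<in>S. \<exists>r>0. \<forall>y. \<delta> x y < r \<longrightarrow> y \<in> S)"
  unfolding gen_top_def by (simp add: topology_inverse'[OF istopology_gen_top])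

lemma topspace_gen_top [simp]: "topspace (gen_top \<delta>) = UNIV"
proof -
  have "openin (gen_top \<delta>) UNIV"
    unfolding openin_gen_top using zero_less_one by blast
  then show ?thesis
    using openin_subset by blast
qed

lemma continuous_map_id_gen_top:
  assumes "\<And>x r. r > 0 \<Longrightarrow> \<exists>s>0. \<forall>y. \<delta> x y < s \<longrightarrow> \<delta>' x y < r"
  shows "continuous_map (gen_top \<delta>) (gen_top \<delta>') id"
  unfolding continuous_map_def
proof (intro conjI allI impI)
  fix S assume S: "openin (gen_top \<delta>') S"
  show "openin (gen_top \<delta>) {x \<in> topspace (gen_top \<delta>). id x \<in> S}"
    unfolding openin_gen_top
  proof (intro ballI)
    fix x assume "x \<in> {x \<in> topspace (gen_top \<delta>). id x \<in> S}"
    then obtain r where "r > 0" "\<forall>y. \<delta>' x y < r \<longrightarrow> y \<in> S"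
      using S unfolding openin_gen_top by auto
    with assms[of r x] show "\<exists>s>0. \<forall>y. \<delta> x y < s \<longrightarrow> y \<in> {x \<in> topspace (gen_top \<delta>). id x \<in> S}"
      by auto
  qed
qed simp

lemma (in Metric_space) gen_top_eq_mtopology:
  assumes "M = UNIV"
  shows "gen_top d = mtopology"
  unfolding topology_eq openin_gen_top openin_mtopology subset_iff in_mball
  using assms by (simp add: Ball_def)

lemma subadditive_le_multiple:
  fixes b :: "nat \<Rightarrow> real"
  assumes "\<And>m n. b (m + n) \<le> b m + b n"
  shows "b (q * k + i) \<le> q * b k + b i"
proof (induction q)
  case (Suc q)
  have "b (Suc q * k + i) = b (k + (q * k + i))"
    by (simp add: add.assoc)
  also have "\<dots> \<le> b k + b (q * k + i)"
    by (rule assms)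
  finally show ?case
    using Suc by (simp add: algebra_simps)
qed simp

lemma subadditive_over_n_tendsto_Inf:
  fixes b :: "nat \<Rightarrow> real"
  assumes sub: "\<And>m n. b (m + n) \<le> b m + b n" and nonneg: "\<And>n. b n \<ge> 0"
  shows "(\<lambda>n. b n / n) \<longlonglongrightarrow> Inf ((\<lambda>n. b n / n) ` {1..})"
proof (rule LIMSEQ_I)
  define L where "L = Inf ((\<lambda>n. b n / n) ` {1..})"
  have L_le: "L \<le> b n / n" if "n \<ge> 1" for n
    unfolding L_def by (rule cInf_lower) (use that nonneg in \<open>auto intro: bdd_belowI[of _ 0]\<close>)
  fix r :: real assume "r > 0"
  then obtain k where k: "k \<ge> 1" "b k / k < L + r / 2"
    using cInf_lessD[of "(\<lambda>n. b n / n) ` {1..}" "L + r / 2"] unfolding L_def by auto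
  define M where "M = (\<Sum>i<k. b i)"
  have b_le: "b n \<le> n / k * b k + M" for n
  proof -
    have "b n = b (n div k * k + n mod k)"
      by simp
    also have "\<dots> \<le> real (n div k) * b k + b (n mod k)"
      by (fact subadditive_le_multiple[of b, OF sub])
    also have "real (n div k) * b k \<le> n / k * b k"
      by (rule mult_right_mono[OF of_nat_div_le_of_nat nonneg])
    also have "b (n mod k) \<le> M"
      unfolding M_def by (rule member_le_sum) (use k(1) nonneg in auto)
    finally show ?thesis by simp
  qed
  obtain N :: nat where "N > max 1 (2 * M / r)"
    using reals_Archimedean2 by blast
  then have N: "N \<ge> 1" "N > 2 * M / r"
    by simp_all
  have "\<bar>b n / n - L\<bar> < r" if "n \<ge> N" for n
  proof -
    have n: "n \<ge> 1" "real n > 2 * M / r"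
      using N that by auto
    have "b n / n \<le> (n / k * b k + M) / n"
      by (rule divide_right_mono[OF b_le]) simp
    also have "\<dots> = b k / k + M / n"
      using n by (simp add: field_simps)
    also have "M / n < r / 2"
      using n \<open>r > 0\<close> by (simp add: field_simps)
    finally show ?thesis
      using k L_le[OF n(1)] by linarith
  qed
  then show "\<exists>N. \<forall>n\<ge>N. norm (b n / n - L) < r"
    by auto
qed

lemma convergent_quasi_subadditive_over_n:
  fixes a :: "nat \<Rightarrow> real"
  assumes "\<And>m n. a (m + n) \<le> a m + a n + c" and "\<And>n. a n \<ge> 0" and "c \<ge> 0"
  shows "convergent (\<lambda>n. a n / n)"
proof -
  have "(\<lambda>n. (a n + c) / n) \<longlonglongrightarrow> Inf ((\<lambda>n. (a n + c) / n) ` {1..})"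
    by (rule subadditive_over_n_tendsto_Inf) (use assms in \<open>auto simp: algebra_simps\<close>)
  then have "(\<lambda>n. (a n + c) / n - c / n) \<longlonglongrightarrow> Inf ((\<lambda>n. (a n + c) / n) ` {1..}) - 0"
    by (intro tendsto_diff lim_const_over_n)
  then show ?thesis
    unfolding convergent_def by (auto simp: add_divide_distrib)
qed

locale averaged_metric_vector_space =
  fixes sc :: "'k::real_normed_div_algebra \<Rightarrow> 'e::ab_group_add \<Rightarrow> 'e"
    and d :: "'e \<Rightarrow> 'e \<Rightarrow> real"
    and \<mu> :: "'k measure"
    and C0 C1 C2 C3 :: real
  assumes metric_vector_space: "metric_vector_space sc d"
    and translation_invariant: "translation_invariant_C C0 d"
    and lipschitz_multiplicative: "lipschitz_multiplicative C1 C2 C3 sc d"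
    and prob_space_mu: "prob_space \<mu>"
    and sets_eq: "sets \<mu> = sets (restrict_space borel unit_sphere_K)"
begin

sublocale Metric_space UNIV d
  using metric_vector_space by (simp add: metric_vector_space_def)

sublocale prob_space \<mu>
  by (fact prob_space_mu)

lemma gen_top_eq: "gen_top d = mtopology"
  by (simp add: gen_top_eq_mtopology)

lemma scale_add: "sc a (x + y) = sc a x + sc a y"
  and scale_mult: "sc (a * b) x = sc a (sc b x)"
  and scale_left_add: "sc (a + b) x = sc a x + sc b x"
  using metric_vector_space by (simp_all add: metric_vector_space_def left_vector_space_def)

lemma scale_zero [simp]: "sc a 0 = 0"
  using scale_add[of a 0 0] by simp

lemma dist_translate_le: "d (x + z) (y + z) \<le> d x y + C0"
  using translation_invariant by (simp add: translation_invariant_C_def)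

lemma C0_nonneg: "C0 \<ge> 0"
  using dist_translate_le[of 0 0 0] by simp

lemma dist_scale_le: "d (sc l x) (sc l y) \<le> C1 * norm l * d x y + C2 * norm l + C3"
  using lipschitz_multiplicative by (simp add: lipschitz_multiplicative_def)

lemma C1_nonneg: "C1 \<ge> 0"
  using lipschitz_multiplicative by (simp add: lipschitz_multiplicative_def)

lemma space_eq: "space \<mu> = unit_sphere_K"
  using sets_eq_imp_space_eq[OF sets_eq] by (simp add: space_restrict_space)

lemma continuous_map_scale_left: "continuous_map euclidean (gen_top d) (\<lambda>u. sc u x)"
  and continuous_map_scale_right: "continuous_map (gen_top d) (gen_top d) (sc c)"
  and continuous_map_translate: "continuous_map (gen_top d) (gen_top d) (\<lambda>y. y + z)"
proof -
  have add: "continuous_map (prod_topology (gen_top d) (gen_top d)) (gen_top d) (\<lambda>(x, y). x + y)"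
    and scale: "continuous_map (prod_topology euclidean (gen_top d)) (gen_top d) (\<lambda>(c, x). sc c x)"
    using metric_vector_space by (simp_all add: metric_vector_space_def)
  show "continuous_map euclidean (gen_top d) (\<lambda>u. sc u x)"
    using continuous_map_compose[OF continuous_map_pairedI[of euclidean euclidean "\<lambda>u. u"
        "gen_top d" "\<lambda>_. x"] scale] by (simp add: o_def)
  show "continuous_map (gen_top d) (gen_top d) (sc c)"
    using continuous_map_compose[OF continuous_map_pairedI[of "gen_top d" euclidean "\<lambda>_. c"
        "gen_top d" "\<lambda>y. y"] scale] by (simp add: o_def)
  show "continuous_map (gen_top d) (gen_top d) (\<lambda>y. y + z)"
    using continuous_map_compose[OF continuous_map_pairedI[of "gen_top d" "gen_top d" "\<lambda>y. y"
        "gen_top d" "\<lambda>_. z"] add] by (simp add: o_def)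
qed

lemma continuous_map_gen_top_epsilon_delta:
  assumes "continuous_map (gen_top d) (gen_top d) f" and "e > 0"
  shows "\<exists>s>0. \<forall>y. d x y < s \<longrightarrow> d (f x) (f y) < e"
  using assms metric_continuous_map[OF Metric_space_axioms, of f]
  by (simp add: gen_top_eq)

lemma integrable_dist_scale: "integrable \<mu> (\<lambda>u. d (sc u a) (sc u b))"
proof (rule integrable_const_bound)
  have "continuous_map euclidean euclidean (\<lambda>u. d (sc u a) (sc u b))"
    using continuous_map_mdist[of euclidean "metric (UNIV, d)" "\<lambda>u. sc u a" "\<lambda>u. sc u b"]
      continuous_map_scale_left
    by (simp add: gen_top_eq)
  then have "(\<lambda>u. d (sc u a) (sc u b)) \<in> borel_measurable borel"
    by (intro borel_measurable_continuous_onI) simp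
  then show "(\<lambda>u. d (sc u a) (sc u b)) \<in> borel_measurable \<mu>"
    unfolding measurable_cong_sets[OF sets_eq refl] by (rule measurable_restrict_space1)
  show "AE u in \<mu>. norm (d (sc u a) (sc u b)) \<le> C1 * d a b + C2 + C3"
  proof (rule AE_I2)
    fix u assume "u \<in> space \<mu>"
    then have "norm u = 1"
      by (simp add: space_eq unit_sphere_K_def)
    then show "norm (d (sc u a) (sc u b)) \<le> C1 * d a b + C2 + C3"
      using dist_scale_le[of u a b] by simp
  qed
qed

lemma d0_nonneg: "d0 \<mu> sc d a b \<ge> 0"
  unfolding d0_def by (rule integral_nonneg_AE) simp

lemma d0_le_const:
  assumes "\<And>u. norm u = 1 \<Longrightarrow> d (sc u a) (sc u b) \<le> B"
  shows "d0 \<mu> sc d a b \<le> B"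
proof -
  have "d0 \<mu> sc d a b \<le> (\<integral>u. B \<partial>\<mu>)"
    unfolding d0_def
    by (rule integral_mono) (use integrable_dist_scale assms in \<open>auto simp: space_eq unit_sphere_K_def\<close>)
  then show ?thesis
    by (simp add: prob_space)
qed

lemma dist_add_le: "d (a + b) (a' + b') \<le> d a a' + d b b' + 2 * C0"
proof -
  have "d (a + b) (a' + b') \<le> d (a + b) (a' + b) + d (b + a') (b' + a')"
    using triangle[of "a + b" "a' + b" "a' + b'"] by (simp add: add.commute)
  then show ?thesis
    using dist_translate_le[of a b a'] dist_translate_le[of b a' b'] by linarith
qed

lemma d0_scale_add_le:
  "d0 \<mu> sc d (sc (of_nat (m + n)) x) (sc (of_nat (m + n)) y)
     \<le> d0 \<mu> sc d (sc (of_nat m) x) (sc (of_nat m) y) + d0 \<mu> sc d (sc (of_nat n) x) (sc (of_nat n) y) + 2 * C0"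
proof -
  let ?f = "\<lambda>k u. d (sc u (sc (of_nat k) x)) (sc u (sc (of_nat k) y))"
  have "?f (m + n) u \<le> ?f m u + ?f n u + 2 * C0" for u
    using dist_add_le by (simp add: scale_left_add scale_add)
  then have "(\<integral>u. ?f (m + n) u \<partial>\<mu>) \<le> (\<integral>u. ?f m u + ?f n u + 2 * C0 \<partial>\<mu>)"
    by (intro integral_mono integrable_dist_scale Bochner_Integration.integrable_add) auto
  also have "\<dots> = (\<integral>u. ?f m u \<partial>\<mu>) + (\<integral>u. ?f n u \<partial>\<mu>) + 2 * C0"
    using integrable_dist_scale by (simp add: prob_space)
  finally show ?thesis
    unfolding d0_def .
qed

lemma tendsto_delta0:
  "(\<lambda>n. d0 \<mu> sc d (sc (of_nat n) x) (sc (of_nat n) y) / n) \<longlonglongrightarrow> delta0 \<mu> sc d x y"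
proof -
  have "convergent (\<lambda>n. d0 \<mu> sc d (sc (of_nat n) x) (sc (of_nat n) y) / n)"
    by (rule convergent_quasi_subadditive_over_n[where c = "2 * C0"])
      (use d0_scale_add_le d0_nonneg C0_nonneg in auto)
  then show ?thesis
    unfolding delta0_def by (simp add: convergent_LIMSEQ_iff)
qed

lemma dist_scale_translate_le:
  assumes "l \<noteq> 0"
  shows "d (sc k x) (sc k (x + h)) \<le> norm k / norm l * (C1 * d 0 (sc l h) + C2) + C3 + C0"
proof -
  have "k / l * l = k"
    using assms by (simp add: divide_inverse mult.assoc)
  then have "sc k (x + h) = sc (k / l) (sc l h) + sc k x"
    by (simp add: scale_add add.commute flip: scale_mult)
  then have "d (sc k x) (sc k (x + h)) \<le> d 0 (sc (k / l) (sc l h)) + C0"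
    using dist_translate_le[of 0 "sc k x"] by simp
  also have "d 0 (sc (k / l) (sc l h)) \<le> C1 * norm (k / l) * d 0 (sc l h) + C2 * norm (k / l) + C3"
    using dist_scale_le[of "k / l" 0] by simp
  also have "norm (k / l) = norm k / norm l"
    by (simp add: divide_inverse norm_mult norm_inverse)
  finally show ?thesis
    by (simp add: algebra_simps)
qed

lemma delta0_le:
  assumes "l \<noteq> 0"
  shows "delta0 \<mu> sc d x (x + h) \<le> (C1 * d 0 (sc l h) + C2) / norm l"
proof -
  let ?c = "(C1 * d 0 (sc l h) + C2) / norm l"
  have bound: "d0 \<mu> sc d (sc (of_nat n) x) (sc (of_nat n) (x + h)) / n \<le> ?c + (C3 + C0) / n"
    if "n \<ge> 1" for n
  proof -
    have "d0 \<mu> sc d (sc (of_nat n) x) (sc (of_nat n) (x + h)) \<le> n * ?c + C3 + C0"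
    proof (rule d0_le_const)
      fix u :: 'k assume "norm u = 1"
      then show "d (sc u (sc (of_nat n) x)) (sc u (sc (of_nat n) (x + h))) \<le> n * ?c + C3 + C0"
        using dist_scale_translate_le[OF assms, of "u * of_nat n" x h] by (simp add: norm_mult scale_mult)
    qed
    with that show ?thesis
      by (simp add: field_simps)
  qed
  have "(\<lambda>n. ?c + (C3 + C0) / real n) \<longlonglongrightarrow> ?c + 0"
    by (intro tendsto_add tendsto_const lim_const_over_n)
  then have "delta0 \<mu> sc d x (x + h) \<le> ?c + 0"
    by (rule LIMSEQ_le[OF tendsto_delta0]) (use bound in auto)
  then show ?thesis
    by simp
qed

lemma delta0_less_on_small_ball:
  assumes "r > 0"
  shows "\<exists>s>0. \<forall>y. d x y < s \<longrightarrow> delta0 \<mu> sc d x y < r"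
proof -
  obtain m :: nat where "m > max 1 ((C1 + C2) / r)"
    using reals_Archimedean2 by blast
  then have m: "m \<ge> 1" "(C1 + C2) / r < m"
    by simp_all
  have "continuous_map (gen_top d) (gen_top d) (\<lambda>y. sc (of_nat m) (y - x))"
    using continuous_map_compose[OF continuous_map_translate[of "- x"] continuous_map_scale_right]
    by (simp add: o_def)
  from continuous_map_gen_top_epsilon_delta[OF this zero_less_one, of x]
  obtain s where "s > 0" and s: "\<And>y. d x y < s \<Longrightarrow> d 0 (sc (of_nat m) (y - x)) < 1"
    by auto
  have "delta0 \<mu> sc d x y < r" if "d x y < s" for y
  proof -
    have "delta0 \<mu> sc d x y \<le> (C1 * d 0 (sc (of_nat m) (y - x)) + C2) / m"
      using delta0_le[of "of_nat m" x "y - x"] m(1) by simp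
    also have "\<dots> \<le> (C1 + C2) / m"
      using s[OF that] C1_nonneg by (intro divide_right_mono add_right_mono mult_left_le) auto
    also have "\<dots> < r"
      using m \<open>r > 0\<close> by (simp add: field_simps)
    finally show ?thesis .
  qed
  with \<open>s > 0\<close> show ?thesis
    by blast
qed

lemma continuous_map_id_delta0: "continuous_map (gen_top d) (gen_top (delta0 \<mu> sc d)) id"
  by (rule continuous_map_id_gen_top) (rule delta0_less_on_small_ball)

end

theorem lemma5:
  fixes sc :: "'k::real_normed_div_algebra \<Rightarrow> 'e::ab_group_add \<Rightarrow> 'e"
    and d :: "'e \<Rightarrow> 'e \<Rightarrow> real"
    and \<mu> :: "'k measure"
  assumes "metric_vector_space sc d"
    and "translation_invariant_C C0 d"
    and "lipschitz_multiplicative C1 C2 C3 sc d"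
    and "haar_prob_on_unit_sphere \<mu>"
  shows "(\<forall>S. closedin (gen_top (delta0 \<mu> sc d)) S \<longrightarrow> closedin (gen_top d) S) \<and>
         (\<forall>S. openin (gen_top (delta0 \<mu> sc d)) S \<longrightarrow> openin (gen_top d) S)"
proof -
  interpret averaged_metric_vector_space sc d \<mu> C0 C1 C2 C3
    using assms by (simp add: averaged_metric_vector_space_def haar_prob_on_unit_sphere_def)
  show ?thesis
    using closedin_continuous_map_preimage[OF continuous_map_id_delta0]
      openin_continuous_map_preimage[OF continuous_map_id_delta0]
    by simp
qed

end
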